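(* Let $\mathcal{Q}_A,\mathcal{K}_A,\mathcal{Q}_B,\mathcal{K}_B$ be finite nonempty sets of values, and let $\mathrm{pred}_A:\mathcal{Q}_A\times\mathcal{K}_A\to\{0,1\}$ and $\mathrm{pred}_B:\mathcal{Q}_B\times\mathcal{K}_B\to\{0,1\}$ be predicates. Let the disjoint union $\mathcal{Q}_A\sqcup\mathcal{K}_A\sqcup\mathcal{Q}_B\sqcup\mathcal{K}_B$ index an orthonormal family of vectors $e_v\in\mathbb{R}^d$ (so the four value sets are embedded one-hot in mutually orthogonal subspaces $Q_A,K_A,Q_B,K_B$). A query token carries a pair $(a,b)\in\mathcal{Q}_A\times\mathcal{Q}_B$ with query vector $e_a+e_b$, and a key token carries a pair $(a',b')\in\mathcal{K}_A\times\mathcal{K}_B$ with key vector $e_{a'}+e_{b'}$. Define the combined selection $$S\big((a,b),(a',b')\big)=\mathrm{pred}_A(a,a')\ \vee\ \mathrm{pred}_B(b,b').$$ Suppose there is a matrix $W\in\mathbb{R}^{d\times d}$ such that the logits $L\big((a,b),(a',b')\big)=(e_a+e_b)^\top W(e_{a'}+e_{b'})$ satisfy, for every query $q\in\mathcal{Q}_A\times\mathcal{Q}_B$ and all keys $k,k'\in\mathcal{K}_A\times\mathcal{K}_B$: (i) if $S(q,k)=S(q,k')=1$ then $L(q,k)=L(q,k')$; and (ii) if $S(q,k)=1$ and $S(q,k')=0$ then $L(q,k)>L(q,k')$. (These are the conditions under which, in the zero-temperature limit $T\to0^+$ of $\mathrm{softmax}(T^{-1}L)$ over any set of key tokens, the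 attention weights converge to the uniform distribution over the tokens selected by $S$, i.e. to the normalized weights of the selector "$\mathrm{select}(\mathrm{query}_A,\mathrm{key}_A,\mathrm{pred}_A)$ or $\mathrm{select}(\mathrm{query}_B,\mathrm{key}_B,\mathrm{pred}_B)$".) Then either $\mathrm{pred}_A$ is constant, or $\mathrm{pred}_B$ is constant, or both predicates have rank one, meaning there exist functions $f_A:\mathcal{Q}_A\to\{0,1\}$, $g_A:\mathcal{K}_A\to\{0,1\}$ with $\mathrm{pred}_A(a,a')=f_A(a)\wedge g_A(a')$ for all $a,a'$, and likewise $f_B,g_B$ with $\mathrm{pred}_B(b,b')=f_B(b)\wedge g_B(b')$ for all $b,b'$.
   Context: This concerns implementing a Boolean "or" of two RASP selectors as a single attention head. A RASP selector $\mathrm{select}(\mathrm{query},\mathrm{key},\mathrm{pred})$ evaluated on a sequence gives the $0/1$ matrix whose $(i,j)$ entry is $\mathrm{pred}(\mathrm{query}_i,\mathrm{key}_j)$. An attention head with bilinear form $W$ (the $W_{QK}$ matrix) assigns to query token $i$ and key token $j$ the logit $x_i^\top W x_j$, where $x_i$ is the token's residual-stream vector, and attention weights are $\mathrm{softmax}$ of the logits scaled by an inverse temperature $T^{-1}$. *)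

theory Defs
  imports "HOL-Analysis.Analysis"
begin

text \<open>The four value sets are finite (nonempty) types 'qa, 'ka, 'qb, 'kb; their disjoint
union is the sum type 'qa + 'ka + 'qb + 'kb, which indexes the family of vectors e.\<close>

definition orthonormal_family :: "('i \<Rightarrow> real ^ 'd) \<Rightarrow> bool" where
  "orthonormal_family e \<longleftrightarrow> (\<forall>u v. e u \<bullet> e v = (if u = v then 1 else 0))"

definition query_vec :: "('qa + 'ka + 'qb + 'kb \<Rightarrow> real ^ 'd) \<Rightarrow> 'qa \<times> 'qb \<Rightarrow> real ^ 'd" where
  "query_vec e q = e (Inl (fst q)) + e (Inr (Inr (Inl (snd q))))"

definition key_vec :: "('qa + 'ka + 'qb + 'kb \<Rightarrow> real ^ 'd) \<Rightarrow> 'ka \<times> 'kb \<Rightarrow> real ^ 'd" where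
  "key_vec e k = e (Inr (Inl (fst k))) + e (Inr (Inr (Inr (snd k))))"

definition logit :: "('qa + 'ka + 'qb + 'kb \<Rightarrow> real ^ 'd) \<Rightarrow> real ^ 'd ^ 'd
                     \<Rightarrow> 'qa \<times> 'qb \<Rightarrow> 'ka \<times> 'kb \<Rightarrow> real" where
  "logit e W q k = query_vec e q \<bullet> (W *v key_vec e k)"

definition sel_or :: "('qa \<Rightarrow> 'ka \<Rightarrow> bool) \<Rightarrow> ('qb \<Rightarrow> 'kb \<Rightarrow> bool)
                      \<Rightarrow> 'qa \<times> 'qb \<Rightarrow> 'ka \<times> 'kb \<Rightarrow> bool" where
  "sel_or pA pB q k \<longleftrightarrow> pA (fst q) (fst k) \<or> pB (snd q) (snd k)"

definition const_pred :: "('q \<Rightarrow> 'k \<Rightarrow> bool) \<Rightarrow> bool" where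
  "const_pred p \<longleftrightarrow> (\<exists>c. \<forall>a a'. p a a' = c)"

definition rank_one_pred :: "('q \<Rightarrow> 'k \<Rightarrow> bool) \<Rightarrow> bool" where
  "rank_one_pred p \<longleftrightarrow> (\<exists>f g. \<forall>a a'. p a a' = (f a \<and> g a'))"

end

theory Submission
  imports Defs
begin

text \<open>The logit of query (a,b) and key (a',b') splits as
  \<alpha>(a,a') + \<beta>(a,b') + \<gamma>(b,a') + \<delta>(b,b'), so exchanging the A-parts of two queries, or of two
  keys, does not change the sum of the two logits. If some row of pred_A is not constant,
  comparing the keys (s1,t1), (s1,t0), (s0,t1), (s0,t0) through the key exchange law shows
  that every row of pred_B is constant. If pred_B is then not constant, it has a full row and
  an empty row, and the query exchange law between these two rows forces pred_A to be a
  rectangle.\<close>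

lemma rank_one_pred_if_rows_constant:
  assumes "\<And>a. (\<forall>a'. p a a') \<or> (\<forall>a'. \<not> p a a')"
  shows "rank_one_pred p"
  unfolding rank_one_pred_def
  by (rule exI[of _ "\<lambda>a. \<forall>a'. p a a'"], rule exI[of _ "\<lambda>_. True"]) (use assms in blast)

lemma rank_one_pred_if_rectangular:
  assumes "\<And>a1 a2 x y. p a1 x \<Longrightarrow> p a2 y \<Longrightarrow> p a1 y"
  shows "rank_one_pred p"
  unfolding rank_one_pred_def
  by (rule exI[of _ "\<lambda>a. \<exists>x. p a x"], rule exI[of _ "\<lambda>y. \<exists>a. p a y"]) (use assms in blast)

locale or_selector_logit =
  fixes pA :: "'qa \<Rightarrow> 'ka \<Rightarrow> bool" and pB :: "'qb \<Rightarrow> 'kb \<Rightarrow> bool"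
    and L :: "'qa \<Rightarrow> 'qb \<Rightarrow> 'ka \<Rightarrow> 'kb \<Rightarrow> real"
  assumes query_exchange: "L a1 b1 x y + L a2 b2 x y = L a1 b2 x y + L a2 b1 x y"
    and key_exchange: "L a b x1 y1 + L a b x2 y2 = L a b x1 y2 + L a b x2 y1"
    and selected_eq: "pA a x \<or> pB b y \<Longrightarrow> pA a x' \<or> pB b y' \<Longrightarrow> L a b x y = L a b x' y'"
    and selected_gt: "pA a x \<or> pB b y \<Longrightarrow> \<not> (pA a x' \<or> pB b y') \<Longrightarrow> L a b x y > L a b x' y'"
begin

lemma swap: "or_selector_logit pB pA (\<lambda>b a y x. L a b x y)"
proof
  show "L a1 b1 x y + L a2 b2 x y = L a2 b1 x y + L a1 b2 x y" for a1 a2 b1 b2 x y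
    by (metis query_exchange add.commute)
  show "L a b x1 y1 + L a b x2 y2 = L a b x2 y1 + L a b x1 y2" for a b x1 x2 y1 y2
    by (metis key_exchange add.commute)
  show "L a b x y = L a b x' y'" if "pB b y \<or> pA a x" "pB b y' \<or> pA a x'" for a b x y x' y'
    using selected_eq that by blast
  show "L a b x y > L a b x' y'" if "pB b y \<or> pA a x" "\<not> (pB b y' \<or> pA a x')" for a b x y x' y'
    using selected_gt that by blast
qed

lemma predB_rows_constant:
  assumes s1: "pA a0 s1" and s0: "\<not> pA a0 s0"
  shows "(\<forall>y. pB b y) \<or> (\<forall>y. \<not> pB b y)"
proof (rule ccontr)
  assume "\<not> ?thesis"
  then obtain t1 t0 where t1: "pB b t1" and t0: "\<not> pB b t0" by blast
  have "L a0 b s1 t1 = L a0 b s1 t0" using selected_eq s1 by blast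
  moreover have "L a0 b s1 t1 = L a0 b s0 t1" using selected_eq s1 t1 by blast
  moreover have "L a0 b s1 t1 > L a0 b s0 t0" using selected_gt s1 s0 t0 by blast
  moreover have "L a0 b s1 t1 + L a0 b s0 t0 = L a0 b s1 t0 + L a0 b s0 t1"
    by (rule key_exchange)
  ultimately show False by linarith
qed

lemma predA_rectangular:
  assumes full: "\<And>y. pB bF y" and empty: "\<And>y. \<not> pB bE y"
    and h1: "pA a1 x" and h2: "pA a2 y"
  shows "pA a1 y"
proof (rule ccontr)
  assume ny: "\<not> pA a1 y"
  fix y0
  have g1: "L a1 bE x y0 > L a1 bE y y0"
    using selected_gt[of a1 x bE y0 y y0] h1 ny empty by blast
  have g2: "L a2 bE y y0 \<ge> L a2 bE x y0"
    using selected_eq[of a2 y bE y0 x y0] selected_gt[of a2 y bE y0 x y0] h2 empty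
    by (cases "pA a2 x") fastforce+
  have f1: "L a1 bF x y0 = L a1 bF y y0" and f2: "L a2 bF x y0 = L a2 bF y y0"
    using selected_eq full by blast+
  have "L a1 bE x y0 + L a2 bF x y0 = L a1 bF x y0 + L a2 bE x y0"
    and "L a1 bE y y0 + L a2 bF y y0 = L a1 bF y y0 + L a2 bE y y0"
    by (rule query_exchange)+
  with g1 g2 f1 f2 show False by linarith
qed

lemma const_or_rank_one_if_row_nonconstant:
  assumes "pA a0 s1" and "\<not> pA a0 s0"
  shows "const_pred pB \<or> (rank_one_pred pA \<and> rank_one_pred pB)"
proof -
  have rows: "(\<forall>y. pB b y) \<or> (\<forall>y. \<not> pB b y)" for b
    using predB_rows_constant assms by blast
  show ?thesis
  proof (cases "const_pred pB")
    case False
    then obtain bF bE where "\<And>y. pB bF y" and "\<And>y. \<not> pB bE y"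
      using rows unfolding const_pred_def by metis
    then have "rank_one_pred pA"
      using predA_rectangular by (blast intro: rank_one_pred_if_rectangular)
    with rows show ?thesis by (blast intro: rank_one_pred_if_rows_constant)
  qed simp
qed

theorem const_or_rank_one:
  "const_pred pA \<or> const_pred pB \<or> (rank_one_pred pA \<and> rank_one_pred pB)"
proof -
  consider a s1 s0 where "pA a s1" "\<not> pA a s0"
    | b t1 t0 where "pB b t1" "\<not> pB b t0"
    | "\<And>a. (\<forall>x. pA a x) \<or> (\<forall>x. \<not> pA a x)" "\<And>b. (\<forall>y. pB b y) \<or> (\<forall>y. \<not> pB b y)"
    by blast
  then show ?thesis
  proof cases
    case 1
    then show ?thesis using const_or_rank_one_if_row_nonconstant by blast
  next
    case 2
    then show ?thesis
      using or_selector_logit.const_or_rank_one_if_row_nonconstant[OF swap] by blast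
  next
    case 3
    then show ?thesis by (blast intro: rank_one_pred_if_rows_constant)
  qed
qed

end

lemma logit_split:
  "logit e W (a, b) (x, y) =
     e (Inl a) \<bullet> (W *v e (Inr (Inl x))) + e (Inl a) \<bullet> (W *v e (Inr (Inr (Inr y))))
   + e (Inr (Inr (Inl b))) \<bullet> (W *v e (Inr (Inl x)))
   + e (Inr (Inr (Inl b))) \<bullet> (W *v e (Inr (Inr (Inr y))))"
  unfolding logit_def query_vec_def key_vec_def
  by (simp add: inner_add_left inner_add_right matrix_vector_right_distrib)

theorem mainTheorem1:
  fixes predA :: "'qa::finite \<Rightarrow> 'ka::finite \<Rightarrow> bool"
    and predB :: "'qb::finite \<Rightarrow> 'kb::finite \<Rightarrow> bool"
    and e :: "'qa + 'ka + 'qb + 'kb \<Rightarrow> real ^ 'd::finite"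
    and W :: "real ^ 'd ^ 'd"
  assumes "orthonormal_family e"
    and eq: "\<And>q k k'. sel_or predA predB q k \<Longrightarrow> sel_or predA predB q k'
               \<Longrightarrow> logit e W q k = logit e W q k'"
    and gt: "\<And>q k k'. sel_or predA predB q k \<Longrightarrow> \<not> sel_or predA predB q k'
               \<Longrightarrow> logit e W q k > logit e W q k'"
  shows "const_pred predA \<or> const_pred predB \<or> (rank_one_pred predA \<and> rank_one_pred predB)"
proof -
  have "or_selector_logit predA predB (\<lambda>a b x y. logit e W (a, b) (x, y))"
  proof
    show "logit e W (a1, b1) (x, y) + logit e W (a2, b2) (x, y)
        = logit e W (a1, b2) (x, y) + logit e W (a2, b1) (x, y)" for a1 a2 b1 b2 x y
      unfolding logit_split by linarith
    show "logit e W (a, b) (x1, y1) + logit e W (a, b) (x2, y2)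
        = logit e W (a, b) (x1, y2) + logit e W (a, b) (x2, y1)" for a b x1 x2 y1 y2
      unfolding logit_split by linarith
    show "logit e W (a, b) (x, y) = logit e W (a, b) (x', y')"
      if "predA a x \<or> predB b y" "predA a x' \<or> predB b y'" for a b x y x' y'
      using eq[of "(a, b)" "(x, y)" "(x', y')"] that by (simp add: sel_or_def)
    show "logit e W (a, b) (x, y) > logit e W (a, b) (x', y')"
      if "predA a x \<or> predB b y" "\<not> (predA a x' \<or> predB b y')" for a b x y x' y'
      using gt[of "(a, b)" "(x, y)" "(x', y')"] that by (simp add: sel_or_def)
  qed
  then show ?thesis by (rule or_selector_logit.const_or_rank_one)
qed

end
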